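(* Let $G$ be a profinite group and $H\subseteq G$ an open subgroup (of finite index). Let $X$ and $Y$ be discrete $G$-modules and let $f:X\to Y$ be a homomorphism that is $H$-linear (but not necessarily $G$-linear). Define the $G$-linear map $\tilde f:X\to Y$ by $\tilde f(x)=\sum_{gH\in G/H}g f g^{-1}(x)$. Then for every $n\geq 0$ and every $\sigma\in H^n(G,X)$, $$\operatorname{Cor}_H^G\big(f_*\operatorname{Res}_H^G\sigma\big)=\tilde f_*\sigma.$$
   Context: $\operatorname{Res}_H^G$ and $\operatorname{Cor}_H^G$ denote restriction and corestriction in continuous group cohomology; $f_*$ denotes the map on cohomology induced by a module homomorphism. The term $gfg^{-1}$ depends only on the coset $gH$ since $f$ is $H$-linear. *)

theory Defs
  imports "HOL-Analysis.Analysis" "HOL-Algebra.Coset"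
begin

definition totally_disconnected_space :: "'a topology \<Rightarrow> bool" where
  "totally_disconnected_space T \<longleftrightarrow> (\<forall>S. connectedin T S \<longrightarrow> (\<exists>a. S \<subseteq> {a}))"

definition profinite_group :: "('g, 'b) monoid_scheme \<Rightarrow> 'g topology \<Rightarrow> bool" where
  "profinite_group G T \<longleftrightarrow> group G \<and> topspace T = carrier G
     \<and> continuous_map (prod_topology T T) T (\<lambda>(x, y). x \<otimes>\<^bsub>G\<^esub> y)
     \<and> continuous_map T T (\<lambda>x. inv\<^bsub>G\<^esub> x)
     \<and> compact_space T \<and> Hausdorff_space T \<and> totally_disconnected_space T"

text \<open>A discrete G-module: an abelian group (the type 'x) with a G-action by additive maps
  such that every stabiliser is open (equivalently, the action G x X -> X is continuous
  for the discrete topology on X).\<close>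
definition discrete_module ::
  "('g, 'b) monoid_scheme \<Rightarrow> 'g topology \<Rightarrow> ('g \<Rightarrow> 'x::ab_group_add \<Rightarrow> 'x) \<Rightarrow> bool" where
  "discrete_module G T act \<longleftrightarrow>
     (\<forall>x. act \<one>\<^bsub>G\<^esub> x = x)
   \<and> (\<forall>g\<in>carrier G. \<forall>h\<in>carrier G. \<forall>x. act (g \<otimes>\<^bsub>G\<^esub> h) x = act g (act h x))
   \<and> (\<forall>g\<in>carrier G. \<forall>x y. act g (x + y) = act g x + act g y)
   \<and> (\<forall>x. openin T {g \<in> carrier G. act g x = x})"

definition tuples :: "('g, 'b) monoid_scheme \<Rightarrow> nat \<Rightarrow> (nat \<Rightarrow> 'g) set" where
  "tuples G n = PiE {..n} (\<lambda>_. carrier G)"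

text \<open>Homogeneous continuous n-cochains for a subgroup K of G: continuous (= locally constant)
  maps G^(n+1) -> X that are K-equivariant for the diagonal left action; extended by 0.\<close>
definition cochain ::
  "('g, 'b) monoid_scheme \<Rightarrow> 'g topology \<Rightarrow> ('g \<Rightarrow> 'x::ab_group_add \<Rightarrow> 'x) \<Rightarrow> 'g set \<Rightarrow> nat
    \<Rightarrow> ((nat \<Rightarrow> 'g) \<Rightarrow> 'x) \<Rightarrow> bool" where
  "cochain G T act K n \<phi> \<longleftrightarrow>
     continuous_map (product_topology (\<lambda>_. T) {..n}) (discrete_topology UNIV) \<phi>
   \<and> (\<forall>g\<in>tuples G n. \<forall>k\<in>K. \<phi> (\<lambda>i\<in>{..n}. k \<otimes>\<^bsub>G\<^esub> g i) = act k (\<phi> g))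
   \<and> (\<forall>g. g \<notin> tuples G n \<longrightarrow> \<phi> g = 0)"

definition face :: "nat \<Rightarrow> nat \<Rightarrow> (nat \<Rightarrow> 'g) \<Rightarrow> (nat \<Rightarrow> 'g)" where
  "face n i g = (\<lambda>j\<in>{..n}. if j < i then g j else g (Suc j))"

definition cobound ::
  "('g, 'b) monoid_scheme \<Rightarrow> nat \<Rightarrow> ((nat \<Rightarrow> 'g) \<Rightarrow> 'x::ab_group_add) \<Rightarrow> ((nat \<Rightarrow> 'g) \<Rightarrow> 'x)" where
  "cobound G n \<phi> = (\<lambda>g. if g \<in> tuples G (Suc n)
      then (\<Sum>i\<le>Suc n. if even i then \<phi> (face n i g) else - \<phi> (face n i g)) else 0)"

definition cocycles ::
  "('g, 'b) monoid_scheme \<Rightarrow> 'g topology \<Rightarrow> ('g \<Rightarrow> 'x::ab_group_add \<Rightarrow> 'x) \<Rightarrow> 'g set \<Rightarrow> nat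
    \<Rightarrow> ((nat \<Rightarrow> 'g) \<Rightarrow> 'x) set" where
  "cocycles G T act K n = {\<phi>. cochain G T act K n \<phi> \<and> cobound G n \<phi> = (\<lambda>_. 0)}"

definition coboundaries ::
  "('g, 'b) monoid_scheme \<Rightarrow> 'g topology \<Rightarrow> ('g \<Rightarrow> 'x::ab_group_add \<Rightarrow> 'x) \<Rightarrow> 'g set \<Rightarrow> nat
    \<Rightarrow> ((nat \<Rightarrow> 'g) \<Rightarrow> 'x) set" where
  "coboundaries G T act K n = (case n of 0 \<Rightarrow> {\<lambda>_. 0}
      | Suc m \<Rightarrow> cobound G m ` {\<psi>. cochain G T act K m \<psi>})"

definition cls ::
  "('g, 'b) monoid_scheme \<Rightarrow> 'g topology \<Rightarrow> ('g \<Rightarrow> 'x::ab_group_add \<Rightarrow> 'x) \<Rightarrow> 'g set \<Rightarrow> nat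
    \<Rightarrow> ((nat \<Rightarrow> 'g) \<Rightarrow> 'x) \<Rightarrow> ((nat \<Rightarrow> 'g) \<Rightarrow> 'x) set" where
  "cls G T act K n \<phi> = {\<psi> \<in> cocycles G T act K n. (\<lambda>g. \<psi> g - \<phi> g) \<in> coboundaries G T act K n}"

definition coh ::
  "('g, 'b) monoid_scheme \<Rightarrow> 'g topology \<Rightarrow> ('g \<Rightarrow> 'x::ab_group_add \<Rightarrow> 'x) \<Rightarrow> 'g set \<Rightarrow> nat
    \<Rightarrow> ((nat \<Rightarrow> 'g) \<Rightarrow> 'x) set set" where
  "coh G T act K n = cls G T act K n ` cocycles G T act K n"

definition induced ::
  "('g, 'b) monoid_scheme \<Rightarrow> 'g topology \<Rightarrow> ('g \<Rightarrow> 'y::ab_group_add \<Rightarrow> 'y) \<Rightarrow> 'g set \<Rightarrow> nat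
    \<Rightarrow> (((nat \<Rightarrow> 'g) \<Rightarrow> 'x) \<Rightarrow> ((nat \<Rightarrow> 'g) \<Rightarrow> 'y)) \<Rightarrow> ((nat \<Rightarrow> 'g) \<Rightarrow> 'x) set
    \<Rightarrow> ((nat \<Rightarrow> 'g) \<Rightarrow> 'y) set" where
  "induced G T actB K' n F c = the_elem ((\<lambda>\<phi>. cls G T actB K' n (F \<phi>)) ` c)"

definition coh_map ::
  "('g, 'b) monoid_scheme \<Rightarrow> 'g topology \<Rightarrow> ('g \<Rightarrow> 'y::ab_group_add \<Rightarrow> 'y) \<Rightarrow> 'g set \<Rightarrow> nat
    \<Rightarrow> ('x::ab_group_add \<Rightarrow> 'y) \<Rightarrow> ((nat \<Rightarrow> 'g) \<Rightarrow> 'x) set \<Rightarrow> ((nat \<Rightarrow> 'g) \<Rightarrow> 'y) set" where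
  "coh_map G T actY K n f c = induced G T actY K n (\<lambda>\<phi>. f \<circ> \<phi>) c"

text \<open>Restriction H^n(G,X) -> H^n(H,X): the inclusion of G-equivariant into H-equivariant cochains.\<close>
definition Res ::
  "('g, 'b) monoid_scheme \<Rightarrow> 'g topology \<Rightarrow> ('g \<Rightarrow> 'x::ab_group_add \<Rightarrow> 'x) \<Rightarrow> 'g set \<Rightarrow> nat
    \<Rightarrow> ((nat \<Rightarrow> 'g) \<Rightarrow> 'x) set \<Rightarrow> ((nat \<Rightarrow> 'g) \<Rightarrow> 'x) set" where
  "Res G T act H n c = induced G T act H n id c"

definition lcos :: "('g, 'b) monoid_scheme \<Rightarrow> 'g set \<Rightarrow> 'g set set" where
  "lcos G H = {a <#\<^bsub>G\<^esub> H | a. a \<in> carrier G}"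

definition rep :: "'g set \<Rightarrow> 'g" where
  "rep C = (SOME r. r \<in> C)"

text \<open>Corestriction H^n(H,X) -> H^n(G,X): the norm map  phi |-> sum_{sigma in G/H} sigma . phi
  on H-equivariant cochains, (sigma . phi)(g) = sigma phi(sigma^-1 g).\<close>
definition norm_cochain ::
  "('g, 'b) monoid_scheme \<Rightarrow> ('g \<Rightarrow> 'x::ab_group_add \<Rightarrow> 'x) \<Rightarrow> 'g set \<Rightarrow> nat
    \<Rightarrow> ((nat \<Rightarrow> 'g) \<Rightarrow> 'x) \<Rightarrow> ((nat \<Rightarrow> 'g) \<Rightarrow> 'x)" where
  "norm_cochain G act H n \<phi> = (\<lambda>g. if g \<in> tuples G n
      then (\<Sum>C\<in>lcos G H. act (rep C) (\<phi> (\<lambda>i\<in>{..n}. inv\<^bsub>G\<^esub> (rep C) \<otimes>\<^bsub>G\<^esub> g i)))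
      else 0)"

definition Cor ::
  "('g, 'b) monoid_scheme \<Rightarrow> 'g topology \<Rightarrow> ('g \<Rightarrow> 'x::ab_group_add \<Rightarrow> 'x) \<Rightarrow> 'g set \<Rightarrow> nat
    \<Rightarrow> ((nat \<Rightarrow> 'g) \<Rightarrow> 'x) set \<Rightarrow> ((nat \<Rightarrow> 'g) \<Rightarrow> 'x) set" where
  "Cor G T act H n c = induced G T act (carrier G) n (norm_cochain G act H n) c"

definition tilde_map ::
  "('g, 'b) monoid_scheme \<Rightarrow> 'g set \<Rightarrow> ('g \<Rightarrow> 'x::ab_group_add \<Rightarrow> 'x) \<Rightarrow> ('g \<Rightarrow> 'y::ab_group_add \<Rightarrow> 'y)
    \<Rightarrow> ('x \<Rightarrow> 'y) \<Rightarrow> 'x \<Rightarrow> 'y" where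
  "tilde_map G H actX actY f x = (\<Sum>C\<in>lcos G H. actY (rep C) (f (actX (inv\<^bsub>G\<^esub> (rep C)) x)))"

end

theory Submission
  imports Defs
begin

text \<open>All three maps can be computed on homogeneous cochains. Restriction and \<open>f\<^sub>*\<close> are
  post-composition, corestriction is the norm map \<open>\<phi> \<mapsto> \<Sum>\<^bsub>cH \<in> G/H\<^esub> c \<phi>(c\<inverse> -)\<close>, and each of
  them is a cochain map, so every class in the statement is obtained by applying the maps to one
  \<open>G\<close>-cocycle \<open>\<phi>\<close> representing \<open>\<sigma>\<close>. As \<open>\<phi>\<close> is \<open>G\<close>-equivariant, \<open>c f(\<phi>(c\<inverse> g)) = c f c\<inverse> (\<phi> g)\<close>,
  so the norm of \<open>f \<circ> \<phi>\<close> is literally \<open>f\<^sup>~ \<circ> \<phi>\<close>.\<close>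

section \<open>Locally constant functions\<close>

lemma continuous_map_discrete_compose:
  assumes "continuous_map X (discrete_topology UNIV) f"
  shows "continuous_map X (discrete_topology UNIV) (h \<circ> f)"
  using continuous_map_compose[OF assms, of "discrete_topology UNIV" h] by simp

lemma continuous_map_discrete_binop:
  assumes "continuous_map X (discrete_topology UNIV) f" "continuous_map X (discrete_topology UNIV) g"
  shows "continuous_map X (discrete_topology UNIV) (\<lambda>x. h (f x) (g x))"
proof -
  have "continuous_map X (prod_topology (discrete_topology UNIV) (discrete_topology UNIV)) (\<lambda>x. (f x, g x))"
    using assms by (rule continuous_map_pairedI)
  then have "continuous_map X (discrete_topology UNIV) (\<lambda>x. (f x, g x))"
    by (simp flip: prod_topology_discrete_topology)
  from continuous_map_discrete_compose[OF this, of "case_prod h"] show ?thesis by (simp add: o_def)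
qed

lemma continuous_map_discrete_sum:
  fixes f :: "'i \<Rightarrow> 'a \<Rightarrow> 'b::comm_monoid_add"
  assumes "\<And>i. i \<in> I \<Longrightarrow> continuous_map X (discrete_topology UNIV) (f i)"
  shows "continuous_map X (discrete_topology UNIV) (\<lambda>x. \<Sum>i\<in>I. f i x)"
  using assms
  by (induction I rule: infinite_finite_induct) (auto intro: continuous_map_discrete_binop)

section \<open>The relative trace\<close>

lemma (in group) lcos_rep:
  assumes "subgroup H G" and "D \<in> lcos G H"
  shows "rep D \<in> D" "D = rep D <# H" "rep D \<in> carrier G"
proof -
  obtain a where a: "a \<in> carrier G" "D = a <# H" using assms(2) by (auto simp: lcos_def)
  have "a \<in> D" using a subgroup.one_closed[OF assms(1)] by (force simp: l_coset_def)
  then show rep: "rep D \<in> D" unfolding rep_def by (rule someI)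
  then show "D = rep D <# H" using l_repr_independence[OF _ a(1) assms(1)] a by simp
  show "rep D \<in> carrier G" using rep a l_coset_carrier[OF _ _ assms(1)] by blast
qed

lemma (in group) lcos_left_translate:
  assumes "subgroup H G" and "D \<in> lcos G H" and "k \<in> carrier G"
  shows "k <# D \<in> lcos G H" "\<exists>h\<in>H. rep (k <# D) = k \<otimes> rep D \<otimes> h"
proof -
  have D: "D = rep D <# H" "rep D \<in> carrier G" using lcos_rep[OF assms(1,2)] by auto
  have kD: "k <# D = (k \<otimes> rep D) <# H"
    using lcos_m_assoc[OF subgroup.subset[OF assms(1)] assms(3) D(2)] D(1) by simp
  then show translate: "k <# D \<in> lcos G H" using assms(3) D(2) by (auto simp: lcos_def)
  show "\<exists>h\<in>H. rep (k <# D) = k \<otimes> rep D \<otimes> h"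
    using lcos_rep(1)[OF assms(1) translate] kD by (auto simp: l_coset_def)
qed

lemma (in group) sum_lcos_left_translate:
  assumes "subgroup H G" and "k \<in> carrier G"
    and "\<And>c h. c \<in> carrier G \<Longrightarrow> h \<in> H \<Longrightarrow> t (c \<otimes> h) = t c"
  shows "(\<Sum>C\<in>lcos G H. t (k \<otimes> rep C)) = (\<Sum>C\<in>lcos G H. t (rep C))"
proof (rule sum.reindex_bij_witness[where i = "\<lambda>C. inv k <# C" and j = "\<lambda>C. k <# C"])
  fix C assume C: "C \<in> lcos G H"
  have sub: "C \<subseteq> carrier G"
    using C l_coset_subset_G[OF subgroup.subset[OF assms(1)]] by (auto simp: lcos_def)
  show "inv k <# (k <# C) = C" "k <# (inv k <# C) = C"
    using assms(2) sub by (simp_all add: lcos_m_assoc lcos_mult_one)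
  show "k <# C \<in> lcos G H" "inv k <# C \<in> lcos G H"
    using lcos_left_translate(1)[OF assms(1) C] assms(2) by simp_all
  obtain h where "h \<in> H" "rep (k <# C) = k \<otimes> rep C \<otimes> h"
    using lcos_left_translate(2)[OF assms(1) C assms(2)] by blast
  then show "t (rep (k <# C)) = t (k \<otimes> rep C)"
    using assms(2,3) lcos_rep(3)[OF assms(1) C] by simp
qed

definition action_on :: "('g, 'b) monoid_scheme \<Rightarrow> 'a set \<Rightarrow> ('g \<Rightarrow> 'a \<Rightarrow> 'a) \<Rightarrow> bool" where
  "action_on G A \<alpha> \<longleftrightarrow> (\<forall>c\<in>carrier G. \<forall>a\<in>A. \<alpha> c a \<in> A) \<and> (\<forall>a\<in>A. \<alpha> \<one>\<^bsub>G\<^esub> a = a)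
     \<and> (\<forall>c\<in>carrier G. \<forall>d\<in>carrier G. \<forall>a\<in>A. \<alpha> (c \<otimes>\<^bsub>G\<^esub> d) a = \<alpha> c (\<alpha> d a))"

lemma action_on_discrete_module: "discrete_module G T act \<Longrightarrow> action_on G UNIV act"
  by (simp add: discrete_module_def action_on_def)

lemma additive_discrete_module:
  "discrete_module G T act \<Longrightarrow> c \<in> carrier G \<Longrightarrow> Modules.additive (act c)"
  by (simp add: discrete_module_def Modules.additive_def)

text \<open>The relative trace \<open>Tr\<^sub>H\<^sup>G u = \<Sum>\<^bsub>cH \<in> G/H\<^esub> c \<circ> u \<circ> c\<inverse>\<close> of an \<open>H\<close>-equivariant map \<open>u\<close>;
  the norm map on cochains and \<open>tilde_map\<close> are both instances.\<close>
definition relative_trace ::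
  "('g, 'b) monoid_scheme \<Rightarrow> 'g set \<Rightarrow> ('g \<Rightarrow> 'a \<Rightarrow> 'a) \<Rightarrow> ('g \<Rightarrow> 'y::ab_group_add \<Rightarrow> 'y)
    \<Rightarrow> ('a \<Rightarrow> 'y) \<Rightarrow> 'a \<Rightarrow> 'y" where
  "relative_trace G H \<alpha> act u a = (\<Sum>C\<in>lcos G H. act (rep C) (u (\<alpha> (inv\<^bsub>G\<^esub> rep C) a)))"

lemma (in group) relative_trace_equivariant:
  assumes "subgroup H G" and \<alpha>: "action_on G A \<alpha>" and act: "action_on G UNIV act"
    and additive: "\<And>c. c \<in> carrier G \<Longrightarrow> Modules.additive (act c)"
    and u: "\<And>h a. h \<in> H \<Longrightarrow> a \<in> A \<Longrightarrow> u (\<alpha> h a) = act h (u a)"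
    and "a \<in> A" and k: "k \<in> carrier G"
  shows "relative_trace G H \<alpha> act u (\<alpha> k a) = act k (relative_trace G H \<alpha> act u a)"
proof -
  define t where "t c = act c (u (\<alpha> (inv c) (\<alpha> k a)))" for c
  have t_invariant: "t (c \<otimes> h) = t c" if c: "c \<in> carrier G" and h: "h \<in> H" for c h
  proof -
    have hG: "h \<in> carrier G" using subgroup.mem_carrier[OF assms(1) h] .
    define b where "b = \<alpha> (inv c) (\<alpha> k a)"
    have "b \<in> A" using \<alpha> c k \<open>a \<in> A\<close> by (simp add: action_on_def b_def)
    have "t (c \<otimes> h) = act (c \<otimes> h) (u (\<alpha> (inv h) b))"
      using \<alpha> c hG k \<open>a \<in> A\<close> by (simp add: t_def b_def inv_mult_group action_on_def)
    also have "\<dots> = act (c \<otimes> h) (act (inv h) (u b))"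
      using u[OF subgroup.m_inv_closed[OF assms(1) h] \<open>b \<in> A\<close>] by simp
    also have "\<dots> = act (c \<otimes> h \<otimes> inv h) (u b)"
      using act c hG by (simp add: action_on_def)
    also have "\<dots> = t c" using c hG by (simp add: t_def b_def m_assoc)
    finally show ?thesis .
  qed
  have "relative_trace G H \<alpha> act u (\<alpha> k a) = (\<Sum>C\<in>lcos G H. t (rep C))"
    by (simp add: relative_trace_def t_def)
  also have "\<dots> = (\<Sum>C\<in>lcos G H. t (k \<otimes> rep C))"
    using sum_lcos_left_translate[OF assms(1) k t_invariant] by simp
  also have "\<dots> = (\<Sum>C\<in>lcos G H. act k (act (rep C) (u (\<alpha> (inv rep C) a))))"
  proof (rule sum.cong)
    fix C assume "C \<in> lcos G H"
    then have r: "rep C \<in> carrier G" by (rule lcos_rep(3)[OF assms(1)])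
    have "\<alpha> (inv k) (\<alpha> k a) = a"
      using \<alpha> k \<open>a \<in> A\<close> unfolding action_on_def by (metis inv_closed l_inv)
    then have "\<alpha> (inv (k \<otimes> rep C)) (\<alpha> k a) = \<alpha> (inv rep C) a"
      using \<alpha> r k \<open>a \<in> A\<close> by (simp add: action_on_def inv_mult_group)
    then show "t (k \<otimes> rep C) = act k (act (rep C) (u (\<alpha> (inv rep C) a)))"
      using act r k by (simp add: t_def action_on_def)
  qed simp
  also have "\<dots> = act k (relative_trace G H \<alpha> act u a)"
    using additive[OF k] by (simp add: relative_trace_def Modules.additive.sum)
  finally show ?thesis .
qed

lemma (in group) relative_trace_comp_equivariant:
  assumes "subgroup H G"
    and "\<And>c a. c \<in> carrier G \<Longrightarrow> a \<in> A \<Longrightarrow> \<phi> (\<alpha> c a) = \<beta> c (\<phi> a)" and "a \<in> A"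
  shows "relative_trace G H \<alpha> act (u \<circ> \<phi>) a = relative_trace G H \<beta> act u (\<phi> a)"
  using assms lcos_rep(3)[OF assms(1)] by (simp add: relative_trace_def)

lemma (in group) relative_trace_diff:
  assumes "subgroup H G" and "\<And>c. c \<in> carrier G \<Longrightarrow> Modules.additive (act c)"
  shows "relative_trace G H \<alpha> act (\<lambda>b. u b - v b) a
    = relative_trace G H \<alpha> act u a - relative_trace G H \<alpha> act v a"
  using assms lcos_rep(3)[OF assms(1)]
  by (simp add: relative_trace_def Modules.additive.diff sum_subtractf)

lemma (in group) additive_relative_trace:
  assumes "subgroup H G" and "\<And>c. c \<in> carrier G \<Longrightarrow> Modules.additive (\<alpha> c)"
    and "\<And>c. c \<in> carrier G \<Longrightarrow> Modules.additive (act c)" and "Modules.additive u"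
  shows "Modules.additive (relative_trace G H \<alpha> act u)"
  using assms lcos_rep(3)[OF assms(1)]
  by unfold_locales (simp add: relative_trace_def Modules.additive.add sum.distrib)

section \<open>Cochain maps\<close>

lemma cochain_zero:
  assumes "\<And>k. k \<in> K \<Longrightarrow> Modules.additive (act k)"
  shows "cochain G T act K n (\<lambda>g. 0)"
  using assms by (simp add: cochain_def Modules.additive.zero)

lemma cochain_diff:
  assumes "\<And>k. k \<in> K \<Longrightarrow> Modules.additive (act k)"
    and "cochain G T act K n a" and "cochain G T act K n b"
  shows "cochain G T act K n (\<lambda>g. a g - b g)"
  using assms by (simp add: cochain_def continuous_map_discrete_binop Modules.additive.diff)

lemma cobound_diff: "cobound G n (\<lambda>g. a g - b g) = (\<lambda>g. cobound G n a g - cobound G n b g)"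
  unfolding cobound_def
  by (rule ext) (auto simp: sum_subtractf[symmetric] simp del: sum.atMost_Suc intro!: sum.cong)

lemma cobound_comp:
  assumes "Modules.additive u"
  shows "cobound G n (u \<circ> a) = u \<circ> cobound G n a"
  unfolding cobound_def
  by (rule ext) (auto simp: Modules.additive.sum[OF assms] Modules.additive.zero[OF assms]
      Modules.additive.minus[OF assms] simp del: sum.atMost_Suc intro!: sum.cong)

lemma zero_in_coboundaries:
  assumes "\<And>k. k \<in> K \<Longrightarrow> Modules.additive (act k)"
  shows "(\<lambda>g. 0) \<in> coboundaries G T act K n"
proof (cases n)
  case (Suc m)
  have "(\<lambda>g. 0) \<in> cobound G m ` {\<psi>. cochain G T act K m \<psi>}"
    by (rule image_eqI[where x = "\<lambda>g. 0"])
      (simp_all only: cobound_def minus_zero if_cancel sum.neutral_const mem_Collect_eq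
        cochain_zero[OF assms])
  then show ?thesis using Suc by (simp add: coboundaries_def)
qed (simp add: coboundaries_def)

lemma coboundaries_diff:
  assumes "\<And>k. k \<in> K \<Longrightarrow> Modules.additive (act k)"
    and "a \<in> coboundaries G T act K n" and "b \<in> coboundaries G T act K n"
  shows "(\<lambda>g. a g - b g) \<in> coboundaries G T act K n"
proof (cases n)
  case (Suc m)
  then obtain \<alpha> \<beta> where "cochain G T act K m \<alpha>" "a = cobound G m \<alpha>"
      and "cochain G T act K m \<beta>" "b = cobound G m \<beta>"
    using assms(2,3) by (auto simp: coboundaries_def)
  then have "cochain G T act K m (\<lambda>g. \<alpha> g - \<beta> g)"
    and "(\<lambda>g. a g - b g) = cobound G m (\<lambda>g. \<alpha> g - \<beta> g)"
    by (simp_all add: cochain_diff[OF assms(1)] cobound_diff)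
  then show ?thesis using Suc by (simp add: coboundaries_def)
qed (use assms(2,3) in \<open>simp add: coboundaries_def\<close>)

lemma cls_eqI:
  assumes "\<And>k. k \<in> K \<Longrightarrow> Modules.additive (act k)"
    and "(\<lambda>g. a g - b g) \<in> coboundaries G T act K n"
  shows "cls G T act K n a = cls G T act K n b"
proof -
  have "(\<lambda>g. 0 - (a g - b g)) \<in> coboundaries G T act K n"
    by (rule coboundaries_diff[OF assms(1) zero_in_coboundaries[OF assms(1)] assms(2)])
  then have ba: "(\<lambda>g. b g - a g) \<in> coboundaries G T act K n" by simp
  have "(\<lambda>g. x g - b g) \<in> coboundaries G T act K n"
    if "(\<lambda>g. x g - a g) \<in> coboundaries G T act K n" for x
    using coboundaries_diff[OF assms(1) that ba] by (simp add: algebra_simps)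
  moreover have "(\<lambda>g. x g - a g) \<in> coboundaries G T act K n"
    if "(\<lambda>g. x g - b g) \<in> coboundaries G T act K n" for x
    using coboundaries_diff[OF assms(1) that assms(2)] by (simp add: algebra_simps)
  ultimately have "\<forall>x. (\<lambda>g. x g - a g) \<in> coboundaries G T act K n
      \<longleftrightarrow> (\<lambda>g. x g - b g) \<in> coboundaries G T act K n"
    by blast
  then show ?thesis by (simp add: cls_def)
qed

lemma cocycle_in_cls:
  assumes "\<And>k. k \<in> K \<Longrightarrow> Modules.additive (act k)" and "\<phi> \<in> cocycles G T act K n"
  shows "\<phi> \<in> cls G T act K n \<phi>"
  using assms zero_in_coboundaries[OF assms(1)] by (simp add: cls_def)

definition cochain_map ::
  "('g, 'b) monoid_scheme \<Rightarrow> 'g topology \<Rightarrow> ('g \<Rightarrow> 'x::ab_group_add \<Rightarrow> 'x) \<Rightarrow> 'g set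
    \<Rightarrow> ('g \<Rightarrow> 'y::ab_group_add \<Rightarrow> 'y) \<Rightarrow> 'g set
    \<Rightarrow> (nat \<Rightarrow> ((nat \<Rightarrow> 'g) \<Rightarrow> 'x) \<Rightarrow> ((nat \<Rightarrow> 'g) \<Rightarrow> 'y)) \<Rightarrow> bool" where
  "cochain_map G T act K act' K' F \<longleftrightarrow>
     (\<forall>m a. cochain G T act K m a \<longrightarrow> cochain G T act' K' m (F m a))
   \<and> (\<forall>m a b. F m (\<lambda>g. a g - b g) = (\<lambda>g. F m a g - F m b g))
   \<and> (\<forall>m a. cochain G T act K m a \<longrightarrow> cobound G m (F m a) = F (Suc m) (cobound G m a))"

lemma cochain_map_zero:
  assumes "cochain_map G T act K act' K' F"
  shows "F m (\<lambda>g. 0) = (\<lambda>g. 0)"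
proof -
  have "\<forall>a b. F m (\<lambda>g. a g - b g) = (\<lambda>g. F m a g - F m b g)"
    using assms by (simp add: cochain_map_def)
  from this[rule_format, of "\<lambda>g. 0" "\<lambda>g. 0"] show ?thesis by simp
qed

lemma cocycles_cochain_map:
  assumes "cochain_map G T act K act' K' F" and "\<phi> \<in> cocycles G T act K n"
  shows "F n \<phi> \<in> cocycles G T act' K' n"
  using assms cochain_map_zero[OF assms(1)] by (simp add: cocycles_def cochain_map_def)

lemma induced_cochain_map:
  assumes F: "cochain_map G T act K act' K' F"
    and "\<And>k. k \<in> K \<Longrightarrow> Modules.additive (act k)" and "\<And>k. k \<in> K' \<Longrightarrow> Modules.additive (act' k)"
    and \<phi>: "\<phi> \<in> cocycles G T act K n"
  shows "induced G T act' K' n (F n) (cls G T act K n \<phi>) = cls G T act' K' n (F n \<phi>)"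
proof -
  have "cls G T act' K' n (F n \<psi>) = cls G T act' K' n (F n \<phi>)" if "\<psi> \<in> cls G T act K n \<phi>" for \<psi>
  proof (cases n)
    case 0
    then have "\<psi> = \<phi>" using that by (simp add: cls_def coboundaries_def fun_eq_iff)
    then show ?thesis by simp
  next
    case (Suc m)
    have "(\<lambda>g. \<psi> g - \<phi> g) \<in> cobound G m ` {\<beta>. cochain G T act K m \<beta>}"
      using that Suc by (simp add: cls_def coboundaries_def)
    then obtain \<beta> where \<beta>: "cochain G T act K m \<beta>" "(\<lambda>g. \<psi> g - \<phi> g) = cobound G m \<beta>"
      by blast
    have "(\<lambda>g. F n \<psi> g - F n \<phi> g) = F n (\<lambda>g. \<psi> g - \<phi> g)"
      using F by (simp add: cochain_map_def)
    also have "\<dots> = F (Suc m) (cobound G m \<beta>)" using \<beta>(2) Suc by simp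
    also have "\<dots> = cobound G m (F m \<beta>)" using F \<beta>(1) by (simp add: cochain_map_def)
    finally have "(\<lambda>g. F n \<psi> g - F n \<phi> g) = cobound G m (F m \<beta>)" .
    moreover have "cochain G T act' K' m (F m \<beta>)" using F \<beta>(1) by (simp add: cochain_map_def)
    ultimately have "(\<lambda>g. F n \<psi> g - F n \<phi> g) \<in> coboundaries G T act' K' n"
      using Suc by (simp add: coboundaries_def)
    from cls_eqI[OF assms(3) this] show ?thesis .
  qed
  then have "(\<lambda>\<psi>. cls G T act' K' n (F n \<psi>)) ` cls G T act K n \<phi> = {cls G T act' K' n (F n \<phi>)}"
    using cocycle_in_cls[OF assms(2) \<phi>] by blast
  then show ?thesis by (simp add: induced_def)
qed

lemma cochain_map_comp:
  assumes "K' \<subseteq> K" and "Modules.additive u" and "\<And>k x. k \<in> K' \<Longrightarrow> u (act k x) = act' k (u x)"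
  shows "cochain_map G T act K act' K' (\<lambda>m a. u \<circ> a)"
  using assms
  by (auto simp: cochain_map_def cochain_def cobound_comp continuous_map_discrete_compose
      Modules.additive.diff Modules.additive.zero)

abbreviation tuple_mult :: "('g, 'b) monoid_scheme \<Rightarrow> nat \<Rightarrow> 'g \<Rightarrow> (nat \<Rightarrow> 'g) \<Rightarrow> (nat \<Rightarrow> 'g)" where
  "tuple_mult G n c g \<equiv> \<lambda>i\<in>{..n}. c \<otimes>\<^bsub>G\<^esub> g i"

lemma (in group) action_on_tuples: "action_on G (tuples G n) (tuple_mult G n)"
  by (auto simp: action_on_def tuples_def PiE_def Pi_def m_assoc extensional_def fun_eq_iff)

lemma face_in_tuples: "g \<in> tuples G (Suc m) \<Longrightarrow> i \<le> Suc m \<Longrightarrow> face m i g \<in> tuples G m"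
  by (auto simp: tuples_def face_def PiE_def Pi_def)

lemma face_tuple_mult: "face m i (tuple_mult G (Suc m) c g) = tuple_mult G m c (face m i g)"
  by (auto simp: face_def fun_eq_iff)

lemma continuous_map_tuple_mult:
  assumes mult: "continuous_map (prod_topology T T) T (\<lambda>(x, y). x \<otimes>\<^bsub>G\<^esub> y)"
    and "c \<in> topspace T"
  shows "continuous_map (product_topology (\<lambda>_. T) {..n}) (product_topology (\<lambda>_. T) {..n})
           (tuple_mult G n c)"
  unfolding continuous_map_componentwise
proof (intro conjI ballI)
  fix k assume k: "k \<in> {..n}"
  have "continuous_map (product_topology (\<lambda>_. T) {..n}) (prod_topology T T) (\<lambda>g. (c, g k))"
    using assms(2) continuous_map_product_projection[OF k] by (intro continuous_map_pairedI) simp_all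
  from continuous_map_compose[OF this mult]
  show "continuous_map (product_topology (\<lambda>_. T) {..n}) T (\<lambda>g. tuple_mult G n c g k)"
    using k by (simp add: o_def)
qed auto

lemma norm_cochain_eq_relative_trace:
  "g \<in> tuples G n \<Longrightarrow> norm_cochain G act H n \<phi> g = relative_trace G H (tuple_mult G n) act \<phi> g"
  by (simp add: norm_cochain_def relative_trace_def)

lemma (in group) cochain_norm_cochain:
  assumes mult: "continuous_map (prod_topology T T) T (\<lambda>(x, y). x \<otimes> y)"
    and top: "topspace T = carrier G" and "subgroup H G"
    and act: "action_on G UNIV act" and additive: "\<And>c. c \<in> carrier G \<Longrightarrow> Modules.additive (act c)"
    and \<phi>: "cochain G T act H m \<phi>"
  shows "cochain G T act (carrier G) m (norm_cochain G act H m \<phi>)"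
proof -
  have "continuous_map (product_topology (\<lambda>_. T) {..m}) (discrete_topology UNIV)
      (\<lambda>g. \<Sum>C\<in>lcos G H. (act (rep C) \<circ> (\<phi> \<circ> tuple_mult G m (inv rep C))) g)"
    using \<phi> top lcos_rep(3)[OF assms(3)]
    by (intro continuous_map_discrete_sum continuous_map_discrete_compose continuous_map_compose[OF
          continuous_map_tuple_mult[OF mult]]) (simp_all add: cochain_def)
  then have "continuous_map (product_topology (\<lambda>_. T) {..m}) (discrete_topology UNIV)
      (norm_cochain G act H m \<phi>)"
    by (rule continuous_map_eq) (simp add: top tuples_def norm_cochain_def)
  moreover have "norm_cochain G act H m \<phi> (tuple_mult G m k g) = act k (norm_cochain G act H m \<phi> g)"
    if "g \<in> tuples G m" "k \<in> carrier G" for g k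
    using relative_trace_equivariant[OF assms(3) action_on_tuples act additive _ that] \<phi> that
      action_on_tuples[unfolded action_on_def]
    by (simp add: norm_cochain_eq_relative_trace cochain_def)
  ultimately show ?thesis by (simp add: cochain_def norm_cochain_def)
qed

lemma (in group) cobound_norm_cochain:
  assumes "subgroup H G" and additive: "\<And>c. c \<in> carrier G \<Longrightarrow> Modules.additive (act c)"
  shows "cobound G m (norm_cochain G act H m \<phi>) = norm_cochain G act H (Suc m) (cobound G m \<phi>)"
proof
  fix g
  show "cobound G m (norm_cochain G act H m \<phi>) g = norm_cochain G act H (Suc m) (cobound G m \<phi>) g"
  proof (cases "g \<in> tuples G (Suc m)")
    case True
    define s where "s C i = (if even i then act (rep C) (\<phi> (tuple_mult G m (inv rep C) (face m i g)))
      else - act (rep C) (\<phi> (tuple_mult G m (inv rep C) (face m i g))))" for C i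
    have rep: "rep C \<in> carrier G" if "C \<in> lcos G H" for C by (rule lcos_rep(3)[OF assms(1) that])
    have "cobound G m (norm_cochain G act H m \<phi>) g = (\<Sum>i\<le>Suc m. \<Sum>C\<in>lcos G H. s C i)"
      using True face_in_tuples[OF True]
      by (auto simp: cobound_def norm_cochain_def s_def sum_negf simp del: sum.atMost_Suc
          intro!: sum.cong)
    also have "\<dots> = (\<Sum>C\<in>lcos G H. \<Sum>i\<le>Suc m. s C i)" by (rule sum.swap)
    also have "\<dots> = norm_cochain G act H (Suc m) (cobound G m \<phi>) g"
      using True rep action_on_tuples[of "Suc m", unfolded action_on_def]
      by (auto simp: cobound_def norm_cochain_def s_def face_tuple_mult additive
          Modules.additive.sum Modules.additive.minus simp del: sum.atMost_Suc intro!: sum.cong)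
    finally show ?thesis .
  qed (simp add: cobound_def norm_cochain_def)
qed

lemma (in group) cochain_map_norm_cochain:
  assumes "continuous_map (prod_topology T T) T (\<lambda>(x, y). x \<otimes> y)"
    and "topspace T = carrier G" and "subgroup H G"
    and "action_on G UNIV act" and additive: "\<And>c. c \<in> carrier G \<Longrightarrow> Modules.additive (act c)"
  shows "cochain_map G T act H act (carrier G) (norm_cochain G act H)"
  unfolding cochain_map_def
proof (intro conjI allI impI)
  fix m a b
  show "norm_cochain G act H m (\<lambda>g. a g - b g)
      = (\<lambda>g. norm_cochain G act H m a g - norm_cochain G act H m b g)"
  proof
    fix g
    show "norm_cochain G act H m (\<lambda>g. a g - b g) g
        = norm_cochain G act H m a g - norm_cochain G act H m b g"
      by (cases "g \<in> tuples G m")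
        (simp_all add: norm_cochain_eq_relative_trace relative_trace_diff[OF assms(3) additive],
         simp add: norm_cochain_def)
  qed
qed (simp_all add: cochain_norm_cochain[OF assms] cobound_norm_cochain[OF assms(3) additive])

section \<open>Restriction, corestriction and \<open>f\<^sub>*\<close> on cohomology classes\<close>

lemma cocycles_antimono: "H \<subseteq> K \<Longrightarrow> cocycles G T act K n \<subseteq> cocycles G T act H n"
  by (auto simp: cocycles_def cochain_def)

lemma cocycles_comp:
  assumes "K' \<subseteq> K" and "Modules.additive u" and "\<And>k x. k \<in> K' \<Longrightarrow> u (act k x) = act' k (u x)"
    and "\<phi> \<in> cocycles G T act K n"
  shows "u \<circ> \<phi> \<in> cocycles G T act' K' n"
proof -
  have "cochain_map G T act K act' K' (\<lambda>m a. u \<circ> a)" using assms(1-3) by (rule cochain_map_comp)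
  from cocycles_cochain_map[OF this assms(4)] show ?thesis by simp
qed

lemma coh_map_cls:
  assumes "K' \<subseteq> K" and "Modules.additive u" and "\<And>k x. k \<in> K' \<Longrightarrow> u (act k x) = act' k (u x)"
    and "\<And>k. k \<in> K \<Longrightarrow> Modules.additive (act k)" and "\<And>k. k \<in> K' \<Longrightarrow> Modules.additive (act' k)"
    and "\<phi> \<in> cocycles G T act K n"
  shows "coh_map G T act' K' n u (cls G T act K n \<phi>) = cls G T act' K' n (u \<circ> \<phi>)"
proof -
  have "cochain_map G T act K act' K' (\<lambda>m a. u \<circ> a)" using assms(1-3) by (rule cochain_map_comp)
  from induced_cochain_map[OF this assms(4-6)] show ?thesis by (simp add: coh_map_def)
qed

lemma Res_cls:
  assumes "H \<subseteq> K" and additive: "\<And>k. k \<in> K \<Longrightarrow> Modules.additive (act k)"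
    and "\<phi> \<in> cocycles G T act K n"
  shows "Res G T act H n (cls G T act K n \<phi>) = cls G T act H n \<phi>"
proof -
  have "Res G T act H n (cls G T act K n \<phi>) = coh_map G T act H n id (cls G T act K n \<phi>)"
    by (simp add: Res_def coh_map_def comp_def id_def)
  also have "\<dots> = cls G T act H n (id \<circ> \<phi>)"
  proof (rule coh_map_cls)
    show "Modules.additive id" by (simp add: Modules.additive_def)
    show "Modules.additive (act k)" if "k \<in> H" for k using assms(1) that by (auto intro: additive)
  qed (use assms in auto)
  finally show ?thesis by simp
qed

lemma Cor_cls:
  assumes "profinite_group G T" and "subgroup H G" and "discrete_module G T act"
    and "\<phi> \<in> cocycles G T act H n"
  shows "Cor G T act H n (cls G T act H n \<phi>) = cls G T act (carrier G) n (norm_cochain G act H n \<phi>)"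
proof -
  have "group G" and "continuous_map (prod_topology T T) T (\<lambda>(x, y). x \<otimes>\<^bsub>G\<^esub> y)"
    and "topspace T = carrier G"
    using assms(1) by (simp_all add: profinite_group_def)
  moreover note assms(2) action_on_discrete_module[OF assms(3)]
  moreover have additive: "Modules.additive (act c)" if "c \<in> carrier G" for c
    using assms(3) that by (rule additive_discrete_module)
  ultimately have F: "cochain_map G T act H act (carrier G) (norm_cochain G act H)"
    by (rule group.cochain_map_norm_cochain)
  have "Modules.additive (act k)" if "k \<in> H" for k
    using that subgroup.mem_carrier[OF assms(2)] additive by blast
  from induced_cochain_map[OF F this additive assms(4)] show ?thesis by (simp add: Cor_def)
qed

lemma tilde_map_eq_relative_trace: "tilde_map G H actX actY f = relative_trace G H actX actY f"
  by (simp add: fun_eq_iff tilde_map_def relative_trace_def)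

lemma (in group) additive_tilde_map:
  assumes "subgroup H G" and "discrete_module G T actX" and "discrete_module G T' actY"
    and "Modules.additive f"
  shows "Modules.additive (tilde_map G H actX actY f)"
  unfolding tilde_map_eq_relative_trace
  by (rule additive_relative_trace[OF assms(1) _ _ assms(4)])
    (simp_all add: additive_discrete_module[OF assms(2)] additive_discrete_module[OF assms(3)])

lemma (in group) tilde_map_equivariant:
  assumes "subgroup H G" and "discrete_module G T actX" and "discrete_module G T' actY"
    and "\<And>h x. h \<in> H \<Longrightarrow> f (actX h x) = actY h (f x)" and "k \<in> carrier G"
  shows "tilde_map G H actX actY f (actX k x) = actY k (tilde_map G H actX actY f x)"
  unfolding tilde_map_eq_relative_trace
  by (rule relative_trace_equivariant[OF assms(1) action_on_discrete_module[OF assms(2)]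
        action_on_discrete_module[OF assms(3)]])
    (simp_all add: additive_discrete_module[OF assms(3)] assms(4,5))

lemma (in group) norm_cochain_comp_eq_tilde_map:
  assumes "subgroup H G" and "discrete_module G T actX" and "discrete_module G T' actY"
    and "Modules.additive f" and \<phi>: "cochain G T actX (carrier G) n \<phi>"
  shows "norm_cochain G actY H n (f \<circ> \<phi>) = tilde_map G H actX actY f \<circ> \<phi>"
proof
  fix g
  show "norm_cochain G actY H n (f \<circ> \<phi>) g = (tilde_map G H actX actY f \<circ> \<phi>) g"
  proof (cases "g \<in> tuples G n")
    case True
    with \<phi> show ?thesis
      using relative_trace_comp_equivariant[OF assms(1), where A = "tuples G n"
          and \<alpha> = "tuple_mult G n" and \<beta> = actX and u = f]
      by (simp add: norm_cochain_eq_relative_trace tilde_map_eq_relative_trace cochain_def)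
  next
    case False
    with \<phi> show ?thesis
      using additive_tilde_map[OF assms(1-4)]
      by (simp add: norm_cochain_def cochain_def Modules.additive.zero)
  qed
qed

theorem lemma6p4:
  fixes G :: "('g, 'b) monoid_scheme" and T :: "'g topology" and H :: "'g set"
    and actX :: "'g \<Rightarrow> 'x::ab_group_add \<Rightarrow> 'x" and actY :: "'g \<Rightarrow> 'y::ab_group_add \<Rightarrow> 'y"
    and f :: "'x \<Rightarrow> 'y" and n :: nat and \<sigma> :: "((nat \<Rightarrow> 'g) \<Rightarrow> 'x) set"
  assumes "profinite_group G T"
    and "subgroup H G" and "openin T H"
    and "discrete_module G T actX" and "discrete_module G T actY"
    and "\<And>x y. f (x + y) = f x + f y"
    and "\<And>h x. h \<in> H \<Longrightarrow> f (actX h x) = actY h (f x)"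
    and "\<sigma> \<in> coh G T actX (carrier G) n"
  shows "Cor G T actY H n (coh_map G T actY H n f (Res G T actX H n \<sigma>))
         = coh_map G T actY (carrier G) n (tilde_map G H actX actY f) \<sigma>"
proof -
  interpret group G using assms(1) by (simp add: profinite_group_def)
  have H: "H \<subseteq> carrier G" by (rule subgroup.subset[OF assms(2)])
  have f: "Modules.additive f" using assms(6) by (simp add: Modules.additive_def)
  have additiveX: "Modules.additive (actX c)" and additiveY: "Modules.additive (actY c)"
    if "c \<in> carrier G" for c using assms(4,5) that by (simp_all add: additive_discrete_module)
  obtain \<phi> where \<phi>: "\<phi> \<in> cocycles G T actX (carrier G) n" and \<sigma>: "\<sigma> = cls G T actX (carrier G) n \<phi>"
    using assms(8) by (auto simp: coh_def)
  have \<phi>_cochain: "cochain G T actX (carrier G) n \<phi>" using \<phi> by (simp add: cocycles_def)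
  have \<phi>H: "\<phi> \<in> cocycles G T actX H n" using cocycles_antimono[OF H] \<phi> by blast
  have tilde_equivariant:
      "tilde_map G H actX actY f (actX k x) = actY k (tilde_map G H actX actY f x)"
    if "k \<in> carrier G" for k x
    using assms(2,4,5,7) that by (rule tilde_map_equivariant)
  have "Res G T actX H n \<sigma> = cls G T actX H n \<phi>"
    unfolding \<sigma> using H additiveX \<phi> by (rule Res_cls)
  moreover have "coh_map G T actY H n f (cls G T actX H n \<phi>) = cls G T actY H n (f \<circ> \<phi>)"
    by (rule coh_map_cls[OF subset_refl f assms(7) _ _ \<phi>H])
      (simp_all add: H[THEN subsetD] additiveX additiveY)
  moreover have "Cor G T actY H n (cls G T actY H n (f \<circ> \<phi>))
      = cls G T actY (carrier G) n (norm_cochain G actY H n (f \<circ> \<phi>))"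
    using assms(1,2,5) cocycles_comp[OF subset_refl f assms(7) \<phi>H] by (rule Cor_cls)
  moreover have "norm_cochain G actY H n (f \<circ> \<phi>) = tilde_map G H actX actY f \<circ> \<phi>"
    using assms(2,4,5) f \<phi>_cochain by (rule norm_cochain_comp_eq_tilde_map)
  moreover have "coh_map G T actY (carrier G) n (tilde_map G H actX actY f) \<sigma>
      = cls G T actY (carrier G) n (tilde_map G H actX actY f \<circ> \<phi>)"
    unfolding \<sigma>
    by (rule coh_map_cls[OF subset_refl additive_tilde_map[OF assms(2,4,5) f] _ _ _ \<phi>])
      (simp_all add: tilde_equivariant additiveX additiveY)
  ultimately show ?thesis by simp
qed

end
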